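(* Let $x_1,\dots,x_n$ be fixed data, $1\le k\le n$, and $s$ a real-valued permutation-symmetric function of $k$ arguments. Let $(I_1,\dots,I_k)$ be uniformly distributed over all $k$-tuples of distinct indices in $\{1,\dots,n\}$ (subsampling without replacement), $X_i^*=x_{I_i}$, $s^*=s(X_1^*,\dots,X_k^* )$, and $w_j^*=\mathbf{1}\{j\in\{I_1,\dots,I_k\}\}$. With $\mathbb{E}_*,\mathrm{Cov}_*$ denoting expectation and covariance over this subsampling, let $e_j=\mathbb{E}_*[s^*\mid I_1=j]$ and $s_0=\mathbb{E}_*[s^*]$. Then for every $j$, $$\mathrm{Cov}_*(s^*,w_j^* )=\frac{k}{n}(e_j-s_0),$$ and consequently $$\sum_{j=1}^n\mathrm{Cov}_*^2(s^*,w_j^* )=\left(\frac{k}{n}\right)^2\sum_{j=1}^n(e_j-s_0)^2 .$$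
   Context: Equivalently $e_j=\binom{n-1}{k-1}^{-1}\sum_{S\ni j}s(x_S)$ and $s_0=\binom{n}{k}^{-1}\sum_S s(x_S)$, sums over $k$-subsets $S\subseteq\{1,\dots,n\}$. The quantity $\sum_j\mathrm{Cov}_*^2(s^*,w_j^* )$ is called the pseudo infinitesimal jackknife $\mathrm{ps}\text{-}\mathrm{IJ}_\mathrm{U}$. *)

theory Defs
  imports "HOL-Probability.Probability"
begin

definition pmf_cov :: "'b pmf \<Rightarrow> ('b \<Rightarrow> real) \<Rightarrow> ('b \<Rightarrow> real) \<Rightarrow> real" where
  "pmf_cov P f g =
     measure_pmf.expectation P (\<lambda>w. (f w - measure_pmf.expectation P f) *
                                     (g w - measure_pmf.expectation P g))"

definition dist_tuples :: "nat \<Rightarrow> nat \<Rightarrow> nat list set" where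
  "dist_tuples n k = {ts. length ts = k \<and> distinct ts \<and> set ts \<subseteq> {1..n}}"

definition subsample :: "nat \<Rightarrow> nat \<Rightarrow> nat list pmf" where
  "subsample n k = pmf_of_set (dist_tuples n k)"

definition perm_symmetric :: "nat \<Rightarrow> ('a list \<Rightarrow> real) \<Rightarrow> bool" where
  "perm_symmetric k s \<longleftrightarrow>
     (\<forall>xs ys. length xs = k \<longrightarrow> mset ys = mset xs \<longrightarrow> s ys = s xs)"

end

theory Submission
  imports Defs
begin

text \<open>
  As the indices are
  distinct, \<open>w\<^sub>j\<^sup>*\<close> is the sum over positions \<open>i\<close> of \<open>[I\<^sub>i = j]\<close>; swapping positions
  \<open>1\<close> and \<open>i\<close> is a bijection of distinct tuples fixing the symmetric statistic \<open>s\<^sup>*\<close>,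
  so each of the \<open>k\<close> positions contributes \<open>E[s\<^sup>*; I\<^sub>1 = j] = e\<^sub>j / n\<close> and
  \<open>E[s\<^sup>* w\<^sub>j\<^sup>*] = (k/n) e\<^sub>j\<close>. The case \<open>s = 1\<close> gives \<open>E[w\<^sub>j\<^sup>*] = k/n\<close>.
\<close>

lemma cond_pmf_of_set:
  assumes "finite T" "T \<inter> A \<noteq> {}"
  shows "cond_pmf (pmf_of_set T) A = pmf_of_set (T \<inter> A)"
proof (rule pmf_eqI)
  fix y
  have "T \<noteq> {}" using assms(2) by blast
  then have "set_pmf (pmf_of_set T) \<inter> A \<noteq> {}" using assms by simp
  with \<open>T \<noteq> {}\<close> show "pmf (cond_pmf (pmf_of_set T) A) y = pmf (pmf_of_set (T \<inter> A)) y"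
    using assms by (simp add: pmf_cond measure_pmf_of_set indicator_def card_gt_0_iff)
qed

lemma pmf_cov_eq_finite:
  assumes "finite (set_pmf P)"
  shows "pmf_cov P f g =
    measure_pmf.expectation P (\<lambda>w. f w * g w)
    - measure_pmf.expectation P f * measure_pmf.expectation P g"
  using assms
  by (simp add: pmf_cov_def algebra_simps integrable_measure_pmf_finite)

lemma perm_symmetric_map:
  "perm_symmetric k s \<Longrightarrow> perm_symmetric k (\<lambda>ts. s (map f ts))"
  unfolding perm_symmetric_def by (metis length_map mset_map)

lemma distinct_sum_nth_eq:
  fixes c :: "'b::comm_monoid_add"
  assumes "distinct xs"
  shows "(\<Sum>i<length xs. if xs ! i = a then c else 0) = (if a \<in> set xs then c else 0)"
proof -
  have "(\<Sum>i<length xs. if xs ! i = a then c else 0) = sum_list (map (\<lambda>x. if x = a then c else 0) xs)"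
    by (simp add: sum_list_sum_nth atLeast0LessThan)
  also have "\<dots> = (\<Sum>x \<in> set xs. if x = a then c else 0)"
    using assms by (rule sum.distinct_set_conv_list[symmetric])
  finally show ?thesis by simp
qed

lemma finite_dist_tuples: "finite (dist_tuples n k)"
  unfolding dist_tuples_def
  by (rule finite_subset[OF _ finite_lists_length_eq[of "{1..n}" k]]) auto

lemma card_dist_tuples: "k \<le> n \<Longrightarrow> card (dist_tuples n k) = \<Prod>{n - k + 1..n}"
  using card_lists_distinct_length_eq[of "{1..n}" k] by (simp add: dist_tuples_def)

lemma dist_tuples_hd_eq:
  assumes "1 \<le> k" "j \<in> {1..n}"
  shows "{ts \<in> dist_tuples n k. hd ts = j} =
    (#) j ` {us. length us = k - 1 \<and> distinct us \<and> set us \<subseteq> {1..n} - {j}}"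
proof (intro set_eqI iffI)
  fix ts assume "ts \<in> {ts \<in> dist_tuples n k. hd ts = j}"
  with assms(1) show "ts \<in> (#) j ` {us. length us = k - 1 \<and> distinct us \<and> set us \<subseteq> {1..n} - {j}}"
    by (cases ts) (auto simp: dist_tuples_def)
qed (use assms in \<open>auto simp: dist_tuples_def\<close>)

lemma card_dist_tuples_eq_hd:
  assumes "1 \<le> k" "k \<le> n" "j \<in> {1..n}"
  shows "card (dist_tuples n k) = n * card {ts \<in> dist_tuples n k. hd ts = j}"
proof -
  have "card {ts \<in> dist_tuples n k. hd ts = j} = \<Prod>{n - k + 1..n - 1}"
    using assms card_lists_distinct_length_eq[of "{1..n} - {j}" "k - 1"]
    by (simp add: dist_tuples_hd_eq card_image)
  moreover have "{n - k + 1..n} = insert n {n - k + 1..n - 1}" using assms by auto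
  moreover have "n \<notin> {n - k + 1..n - 1}" using assms by auto
  ultimately show ?thesis using assms by (simp add: card_dist_tuples)
qed

lemma sum_dist_tuples_nth_eq_hd:
  assumes "i < k" "perm_symmetric k G"
  shows "sum G {ts \<in> dist_tuples n k. ts ! i = j} = sum G {ts \<in> dist_tuples n k. hd ts = j}"
proof -
  define \<sigma> where "\<sigma> = Transposition.transpose 0 i"
  have perm: "\<sigma> permutes {..<length ts}" if "ts \<in> dist_tuples n k" for ts
    using that assms(1) by (auto simp: \<sigma>_def dist_tuples_def intro: permutes_swap_id)
  have closed: "permute_list \<sigma> ts \<in> dist_tuples n k" if "ts \<in> dist_tuples n k" for ts
    using that perm[OF that] by (simp add: dist_tuples_def)
  have invol: "permute_list \<sigma> (permute_list \<sigma> ts) = ts" if "ts \<in> dist_tuples n k" for ts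
    using perm[OF that]
    by (simp add: permute_list_compose[symmetric] \<sigma>_def flip: comp_def[of \<sigma> \<sigma>])
  have nth_swap: "permute_list \<sigma> ts ! 0 = ts ! i" "permute_list \<sigma> ts ! i = ts ! 0"
    if "ts \<in> dist_tuples n k" for ts
    using that perm[OF that] assms(1) by (auto simp: permute_list_nth \<sigma>_def dist_tuples_def)
  have hd_nth: "hd ts = ts ! 0" if "ts \<in> dist_tuples n k" for ts
    using that assms(1) by (intro hd_conv_nth) (auto simp: dist_tuples_def)
  have G_swap: "G (permute_list \<sigma> ts) = G ts" if "ts \<in> dist_tuples n k" for ts
    using assms(2) that perm[OF that] by (simp add: perm_symmetric_def dist_tuples_def)
  show ?thesis
    by (rule sum.reindex_bij_witness[of _ "permute_list \<sigma>" "permute_list \<sigma>"])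
      (auto simp: invol closed nth_swap G_swap hd_nth)
qed

lemma set_pmf_subsample: "k \<le> n \<Longrightarrow> set_pmf (subsample n k) = dist_tuples n k"
  using finite_dist_tuples card_dist_tuples[of k n]
  by (auto simp: subsample_def prod_pos intro!: set_pmf_of_set)

lemma sum_dist_tuples_mem:
  assumes "perm_symmetric k G"
  shows "(\<Sum>ts \<in> dist_tuples n k. if j \<in> set ts then G ts else 0)
    = real k * sum G {ts \<in> dist_tuples n k. hd ts = j}"
proof -
  have "(\<Sum>ts \<in> dist_tuples n k. if j \<in> set ts then G ts else 0)
      = (\<Sum>ts \<in> dist_tuples n k. \<Sum>i<k. if ts ! i = j then G ts else 0)"
    by (intro sum.cong) (auto simp: dist_tuples_def distinct_sum_nth_eq)
  also have "\<dots> = (\<Sum>i<k. sum G {ts \<in> dist_tuples n k. ts ! i = j})"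
    using finite_dist_tuples by (simp add: sum.swap[of _ "{..<k}"] sum.inter_filter)
  also have "\<dots> = (\<Sum>i<k. sum G {ts \<in> dist_tuples n k. hd ts = j})"
    using assms by (simp add: sum_dist_tuples_nth_eq_hd)
  finally show ?thesis by simp
qed

lemma expectation_subsample_mem:
  assumes "1 \<le> k" "k \<le> n" "j \<in> {1..n}" "perm_symmetric k G"
  shows "measure_pmf.expectation (subsample n k) (\<lambda>ts. G ts * (if j \<in> set ts then 1 else 0))
    = real k / real n * measure_pmf.expectation (cond_pmf (subsample n k) {ts. hd ts = j}) G"
proof -
  define T where "T = dist_tuples n k"
  define H where "H = {ts \<in> T. hd ts = j}"
  have card_T: "card T = n * card H"
    using card_dist_tuples_eq_hd[OF assms(1-3)] by (simp add: T_def H_def)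
  have "card T > 0"
    using assms(2) by (simp add: T_def card_dist_tuples prod_pos)
  then have "T \<noteq> {}" "H \<noteq> {}" "n > 0"
    using card_T by auto
  moreover have "finite T" "finite H"
    using finite_dist_tuples by (simp_all add: T_def H_def)
  moreover have "T \<inter> {ts. hd ts = j} = H"
    by (auto simp: H_def)
  ultimately have "cond_pmf (subsample n k) {ts. hd ts = j} = pmf_of_set H"
    by (simp add: subsample_def T_def cond_pmf_of_set)
  moreover have "(\<Sum>ts \<in> T. G ts * (if j \<in> set ts then 1 else 0)) = real k * sum G H"
    using sum_dist_tuples_mem[OF assms(4)] by (simp add: T_def H_def if_distrib cong: if_cong)
  ultimately show ?thesis
    using \<open>T \<noteq> {}\<close> \<open>H \<noteq> {}\<close> \<open>finite T\<close> \<open>finite H\<close>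
    by (simp add: subsample_def integral_pmf_of_set card_T flip: T_def)
qed

theorem proposition1:
  fixes x :: "nat \<Rightarrow> 'a" and s :: "'a list \<Rightarrow> real" and n k :: nat
  assumes "1 \<le> k" and "k \<le> n"
    and "perm_symmetric k s"
  shows "(\<forall>j\<in>{1..n}.
            pmf_cov (subsample n k) (\<lambda>ts. s (map x ts)) (\<lambda>ts. if j \<in> set ts then 1 else 0)
            = (real k / real n) *
              (measure_pmf.expectation (cond_pmf (subsample n k) {ts. hd ts = j}) (\<lambda>ts. s (map x ts))
               - measure_pmf.expectation (subsample n k) (\<lambda>ts. s (map x ts))))
       \<and> (\<Sum>j=1..n. (pmf_cov (subsample n k) (\<lambda>ts. s (map x ts))
                        (\<lambda>ts. if j \<in> set ts then 1 else 0))\<^sup>2)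
         = (real k / real n)\<^sup>2 *
           (\<Sum>j=1..n. (measure_pmf.expectation (cond_pmf (subsample n k) {ts. hd ts = j}) (\<lambda>ts. s (map x ts))
                        - measure_pmf.expectation (subsample n k) (\<lambda>ts. s (map x ts)))\<^sup>2)"
proof -
  define F where "F = (\<lambda>ts. s (map x ts))"
  have F_symmetric: "perm_symmetric k F"
    using assms(3) by (simp add: F_def perm_symmetric_map)
  have cov: "pmf_cov (subsample n k) F (\<lambda>ts. if j \<in> set ts then 1 else 0)
      = real k / real n * (measure_pmf.expectation (cond_pmf (subsample n k) {ts. hd ts = j}) F
                           - measure_pmf.expectation (subsample n k) F)"
    if "j \<in> {1..n}" for j
  proof -
    have "measure_pmf.expectation (subsample n k) (\<lambda>ts. if j \<in> set ts then 1 else 0)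
        = real k / real n"
      using expectation_subsample_mem[OF assms(1,2) that, of "\<lambda>_. 1"]
      by (simp add: perm_symmetric_def)
    moreover note expectation_subsample_mem[OF assms(1,2) that F_symmetric]
    ultimately show ?thesis
      using assms(2) finite_dist_tuples
      by (simp add: pmf_cov_eq_finite set_pmf_subsample algebra_simps)
  qed
  show ?thesis
    unfolding F_def[symmetric] sum_distrib_left
    by (intro conjI ballI sum.cong refl) (simp_all only: cov power_mult_distrib)
qed

end
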